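(* Let $\mathcal{H}$ be an $n$-dimensional (real or complex) Hilbert space, let $F=\{f_i\}_{i=1}^N$ be a tight frame for $\mathcal{H}$, and let $\{q_i\}_{i=1}^N$ be the weight number sequence associated with a probability sequence $\{p_i\}_{i=1}^N$. Then $(F,S_F^{-1}F)$ is a 1-erasure POD-pair if and only if $(F,S_F^{-1}F)\in\zeta_P^{(1)}$.
   Context: A finite sequence $F=\{f_i\}_{i=1}^N$ in $\mathcal{H}$ is a frame if there are $A,B>0$ with $A\|f\|^2\le\sum_{i=1}^N|\langle f,f_i\rangle|^2\le B\|f\|^2$ for all $f$; it is tight if one can take $A=B$. The frame operator is $S_Ff=\sum_i\langle f,f_i\rangle f_i$; canonical dual $S_F^{-1}F=\{S_F^{-1}f_i\}_{i=1}^N$. A frame $G=\{g_i\}_{i=1}^N$ is a dual of $F$ if $f=\sum_i\langle f,f_i\rangle g_i=\sum_i\langle f,g_i\rangle f_i$ for all $f$; then $(F,G)$ is an $(N,n)$ dual pair. A probability sequence is $\{p_i\}_{i=1}^N$ with $0\le p_i\le1$, $\sum p_i=1$; weight numbers $q_i=\frac{\sum_{j} p_j}{\sum_{j} p_j-p_i}\cdot\frac{N-1}{n}$. For $\Lambda\subseteq\{1,\dots,N\}$ the error operator is $E_{\Lambda,(F,G)}f=\sum_{i\in\Lambda}q_i\langle f,f_i\rangle g_i$. Let $\mathcal{O}_P^{(1)}(F,G)=\max_{|\Lambda|=1}\|E_{\Lambda,(F,G)}\|$ and $\mathcal{A}_P^{(1)}(F,G)=\max_{|\Lambda|=1}\frac{\|E_{\Lambda,(F,G)}\|+\rho(E_{\Lambda,(F,G)})}{2}$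 ($\rho$ = spectral radius); let $\mathcal{O}_P^{(1)}$ and $\mathcal{A}_P^{(1)}$ be their infima over all $(N,n)$ dual pairs in $\mathcal{H}$. A dual pair is a 1-erasure POD-pair if $\mathcal{O}_P^{(1)}(F,G)=\mathcal{O}_P^{(1)}$, and a 1-erasure PASOD-pair if $\mathcal{A}_P^{(1)}(F,G)=\mathcal{A}_P^{(1)}$; $\zeta_P^{(1)}$ is the set of 1-erasure PASOD-pairs. *)

theory Defs
  imports "Jordan_Normal_Form.Spectral_Radius"
begin

text \<open>Model: the n-dimensional Hilbert space over the scalar field K (K = Reals for the
real case, K = UNIV for the complex case) is the set of complex vectors of dimension n
with all entries in K.  Finite sequences indexed 1..N in the paper are indexed 0..N-1 here.\<close>

definition Hvecs :: "complex set \<Rightarrow> nat \<Rightarrow> complex vec set" where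
  "Hvecs K n = {f. f \<in> carrier_vec n \<and> (\<forall>k<n. f $ k \<in> K)}"

definition ip :: "complex vec \<Rightarrow> complex vec \<Rightarrow> complex" where
  "ip f g = (\<Sum>k<dim_vec f. f $ k * cnj (g $ k))"

definition vnorm :: "complex vec \<Rightarrow> real" where
  "vnorm f = sqrt (Re (ip f f))"

definition is_frame :: "complex set \<Rightarrow> nat \<Rightarrow> nat \<Rightarrow> (nat \<Rightarrow> complex vec) \<Rightarrow> bool" where
  "is_frame K n N F \<longleftrightarrow> (\<forall>i<N. F i \<in> Hvecs K n) \<and>
     (\<exists>A B. A > 0 \<and> B > 0 \<and> (\<forall>f\<in>Hvecs K n.
        A * (vnorm f)\<^sup>2 \<le> (\<Sum>i<N. (cmod (ip f (F i)))\<^sup>2) \<and>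
        (\<Sum>i<N. (cmod (ip f (F i)))\<^sup>2) \<le> B * (vnorm f)\<^sup>2))"

definition is_tight_frame :: "complex set \<Rightarrow> nat \<Rightarrow> nat \<Rightarrow> (nat \<Rightarrow> complex vec) \<Rightarrow> bool" where
  "is_tight_frame K n N F \<longleftrightarrow> (\<forall>i<N. F i \<in> Hvecs K n) \<and>
     (\<exists>A. A > 0 \<and> (\<forall>f\<in>Hvecs K n.
        (\<Sum>i<N. (cmod (ip f (F i)))\<^sup>2) = A * (vnorm f)\<^sup>2))"

definition frame_op :: "nat \<Rightarrow> nat \<Rightarrow> (nat \<Rightarrow> complex vec) \<Rightarrow> complex vec \<Rightarrow> complex vec" where
  "frame_op n N F f = finsum_vec TYPE(complex) n (\<lambda>i. ip f (F i) \<cdot>\<^sub>v F i) {..<N}"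

definition canon_dual :: "nat \<Rightarrow> nat \<Rightarrow> (nat \<Rightarrow> complex vec) \<Rightarrow> nat \<Rightarrow> complex vec" where
  "canon_dual n N F i = (THE g. g \<in> carrier_vec n \<and> frame_op n N F g = F i)"

definition is_dual :: "complex set \<Rightarrow> nat \<Rightarrow> nat \<Rightarrow> (nat \<Rightarrow> complex vec) \<Rightarrow> (nat \<Rightarrow> complex vec) \<Rightarrow> bool" where
  "is_dual K n N F G \<longleftrightarrow> is_frame K n N G \<and>
     (\<forall>f\<in>Hvecs K n.
        f = finsum_vec TYPE(complex) n (\<lambda>i. ip f (F i) \<cdot>\<^sub>v G i) {..<N} \<and>
        f = finsum_vec TYPE(complex) n (\<lambda>i. ip f (G i) \<cdot>\<^sub>v F i) {..<N})"

definition is_dual_pair :: "complex set \<Rightarrow> nat \<Rightarrow> nat \<Rightarrow> (nat \<Rightarrow> complex vec) \<Rightarrow> (nat \<Rightarrow> complex vec) \<Rightarrow> bool" where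
  "is_dual_pair K n N F G \<longleftrightarrow> is_frame K n N F \<and> is_dual K n N F G"

definition is_prob_seq :: "nat \<Rightarrow> (nat \<Rightarrow> real) \<Rightarrow> bool" where
  "is_prob_seq N p \<longleftrightarrow> (\<forall>i<N. 0 \<le> p i \<and> p i \<le> 1) \<and> (\<Sum>i<N. p i) = 1"

definition weight :: "nat \<Rightarrow> nat \<Rightarrow> (nat \<Rightarrow> real) \<Rightarrow> nat \<Rightarrow> real" where
  "weight N n p i = (\<Sum>j<N. p j) / ((\<Sum>j<N. p j) - p i) * (real N - 1) / real n"

text \<open>Error operator E_{Lambda,(F,G)} f = sum_{i in Lambda} q_i <f,f_i> g_i, as an n x n matrix.\<close>
definition error_op :: "nat \<Rightarrow> nat \<Rightarrow> (nat \<Rightarrow> real) \<Rightarrow> nat set \<Rightarrow> (nat \<Rightarrow> complex vec) \<Rightarrow> (nat \<Rightarrow> complex vec) \<Rightarrow> complex mat" where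
  "error_op N n p \<Lambda> F G = mat n n (\<lambda>(j,k). \<Sum>i\<in>\<Lambda>. complex_of_real (weight N n p i) * (G i $ j) * cnj (F i $ k))"

definition op_norm :: "complex set \<Rightarrow> nat \<Rightarrow> complex mat \<Rightarrow> real" where
  "op_norm K n M = Sup {vnorm (M *\<^sub>v f) | f. f \<in> Hvecs K n \<and> vnorm f \<le> 1}"

definition O1 :: "complex set \<Rightarrow> nat \<Rightarrow> nat \<Rightarrow> (nat \<Rightarrow> real) \<Rightarrow> (nat \<Rightarrow> complex vec) \<Rightarrow> (nat \<Rightarrow> complex vec) \<Rightarrow> real" where
  "O1 K n N p F G = Max {op_norm K n (error_op N n p \<Lambda> F G) | \<Lambda>. \<Lambda> \<subseteq> {..<N} \<and> card \<Lambda> = 1}"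

definition A1 :: "complex set \<Rightarrow> nat \<Rightarrow> nat \<Rightarrow> (nat \<Rightarrow> real) \<Rightarrow> (nat \<Rightarrow> complex vec) \<Rightarrow> (nat \<Rightarrow> complex vec) \<Rightarrow> real" where
  "A1 K n N p F G = Max {(op_norm K n (error_op N n p \<Lambda> F G) + spectral_radius (error_op N n p \<Lambda> F G)) / 2
      | \<Lambda>. \<Lambda> \<subseteq> {..<N} \<and> card \<Lambda> = 1}"

definition O1_opt :: "complex set \<Rightarrow> nat \<Rightarrow> nat \<Rightarrow> (nat \<Rightarrow> real) \<Rightarrow> real" where
  "O1_opt K n N p = Inf {O1 K n N p F G | F G. is_dual_pair K n N F G}"

definition A1_opt :: "complex set \<Rightarrow> nat \<Rightarrow> nat \<Rightarrow> (nat \<Rightarrow> real) \<Rightarrow> real" where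
  "A1_opt K n N p = Inf {A1 K n N p F G | F G. is_dual_pair K n N F G}"

definition is_POD_pair :: "complex set \<Rightarrow> nat \<Rightarrow> nat \<Rightarrow> (nat \<Rightarrow> real) \<Rightarrow> (nat \<Rightarrow> complex vec) \<Rightarrow> (nat \<Rightarrow> complex vec) \<Rightarrow> bool" where
  "is_POD_pair K n N p F G \<longleftrightarrow> is_dual_pair K n N F G \<and> O1 K n N p F G = O1_opt K n N p"

definition is_PASOD_pair :: "complex set \<Rightarrow> nat \<Rightarrow> nat \<Rightarrow> (nat \<Rightarrow> real) \<Rightarrow> (nat \<Rightarrow> complex vec) \<Rightarrow> (nat \<Rightarrow> complex vec) \<Rightarrow> bool" where
  "is_PASOD_pair K n N p F G \<longleftrightarrow> is_dual_pair K n N F G \<and> A1 K n N p F G = A1_opt K n N p"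

definition zeta1 :: "complex set \<Rightarrow> nat \<Rightarrow> nat \<Rightarrow> (nat \<Rightarrow> real) \<Rightarrow> ((nat \<Rightarrow> complex vec) \<times> (nat \<Rightarrow> complex vec)) set" where
  "zeta1 K n N p = {(F, G). is_PASOD_pair K n N p F G}"

end

theory Submission
  imports Defs "HOL-Analysis.Convex"
begin

text \<open>
  For the canonical dual of a tight frame with frame bound c, the one-element error operators
  are (q_i / c) f_i f_i^*. Being positive, each has spectral radius equal to its norm, so
  A_P^(1)(F, S_F^-1 F) = O_P^(1)(F, S_F^-1 F), and it remains to show that the two optimal
  values agree. Since rho(E) <= ||E||, the infimum of A_P^(1) is at most that of O_P^(1).
  Conversely, any dual pair (F, G) can be balanced: put u_i = alpha_i f_i + beta_i g_i with both
  summands of norm sqrt(||f_i|| ||g_i||) / 2. Then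
  sum_i |<h, u_i>|^2 >= Re sum_i <h, f_i> <g_i, h> = ||h||^2 and
  ||u_i||^2 <= (||f_i|| ||g_i|| + |<g_i, f_i>|) / 2, so the canonical dual V of U satisfies
  ||v_i|| <= ||u_i||. As ||E_i|| = q_i ||f_i|| ||g_i|| and rho(E_i) >= q_i |<g_i, f_i>|, the dual
  pair (U, V) has O_P^(1)(U, V) <= A_P^(1)(F, G).
\<close>

lemma cmod_sum_mult_power2_le:
  fixes a b :: "'i \<Rightarrow> complex"
  shows "(cmod (\<Sum>i\<in>I. a i * b i))\<^sup>2 \<le> (\<Sum>i\<in>I. (cmod (a i))\<^sup>2) * (\<Sum>i\<in>I. (cmod (b i))\<^sup>2)"
proof -
  have "cmod (\<Sum>i\<in>I. a i * b i) \<le> (\<Sum>i\<in>I. cmod (a i) * cmod (b i))"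
    using norm_sum[of "\<lambda>i. a i * b i" I] by (simp add: norm_mult)
  then have "(cmod (\<Sum>i\<in>I. a i * b i))\<^sup>2 \<le> (\<Sum>i\<in>I. cmod (a i) * cmod (b i))\<^sup>2"
    by (intro power_mono) auto
  also have "\<dots> \<le> (\<Sum>i\<in>I. (cmod (a i))\<^sup>2) * (\<Sum>i\<in>I. (cmod (b i))\<^sup>2)"
    by (rule Cauchy_Schwarz_ineq_sum)
  finally show ?thesis .
qed

lemma ip_self_eq_sum: "ip f f = of_real (\<Sum>k<dim_vec f. (cmod (f $ k))\<^sup>2)"
  unfolding ip_def of_real_sum by (intro sum.cong refl) (metis complex_norm_square)

lemma vnorm_power2: "(vnorm f)\<^sup>2 = (\<Sum>k<dim_vec f. (cmod (f $ k))\<^sup>2)"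
  unfolding vnorm_def ip_self_eq_sum by (simp add: sum_nonneg)

lemma ip_self: "ip f f = of_real ((vnorm f)\<^sup>2)"
  unfolding ip_self_eq_sum vnorm_power2 ..

lemma vnorm_nonneg: "0 \<le> vnorm f"
  unfolding vnorm_def ip_self_eq_sum by (simp add: sum_nonneg)

lemma vnorm_zero_vec [simp]: "vnorm (0\<^sub>v n) = 0"
  unfolding vnorm_def ip_def by simp

lemma vnorm_eq_0_iff:
  assumes "f \<in> carrier_vec n"
  shows "vnorm f = 0 \<longleftrightarrow> f = 0\<^sub>v n"
proof
  assume "vnorm f = 0"
  then have "(\<Sum>k<dim_vec f. (cmod (f $ k))\<^sup>2) = 0"
    unfolding vnorm_power2[symmetric] by simp
  then have "\<forall>k<dim_vec f. f $ k = 0"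
    by (subst (asm) sum_nonneg_eq_0_iff) auto
  then show "f = 0\<^sub>v n"
    using assms by (intro eq_vecI) auto
qed simp

lemma vnorm_pos: "f \<in> carrier_vec n \<Longrightarrow> f \<noteq> 0\<^sub>v n \<Longrightarrow> 0 < vnorm f"
  using vnorm_eq_0_iff vnorm_nonneg by (metis less_eq_real_def)

lemma vnorm_smult: "vnorm (c \<cdot>\<^sub>v f) = cmod c * vnorm f"
proof -
  have "(vnorm (c \<cdot>\<^sub>v f))\<^sup>2 = (cmod c * vnorm f)\<^sup>2"
    by (simp add: vnorm_power2 sum_distrib_left norm_mult power_mult_distrib)
  then show ?thesis
    by (simp add: vnorm_nonneg power2_eq_iff_nonneg)
qed

lemma vnorm_unit_vec: "k < n \<Longrightarrow> vnorm (unit_vec n k) = 1"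
proof -
  assume k: "k < n"
  have "(vnorm (unit_vec n k))\<^sup>2 = (\<Sum>l<n. if l = k then 1 else 0)"
    unfolding vnorm_power2 by (intro sum.cong) (auto simp: unit_vec_def)
  then have "(vnorm (unit_vec n k))\<^sup>2 = 1"
    using k by simp
  then show ?thesis
    using vnorm_nonneg[of "unit_vec n k"] by (auto simp: power2_eq_1_iff)
qed

lemma ip_commute: "dim_vec g = dim_vec f \<Longrightarrow> ip g f = cnj (ip f g)"
  unfolding ip_def by (simp add: mult.commute)

lemma ip_smult_left: "ip (c \<cdot>\<^sub>v f) g = c * ip f g"
  unfolding ip_def by (simp add: sum_distrib_left mult.assoc)

lemma ip_smult_right: "dim_vec g = dim_vec f \<Longrightarrow> ip f (c \<cdot>\<^sub>v g) = cnj c * ip f g"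
  unfolding ip_def by (simp add: sum_distrib_left algebra_simps)

lemma ip_add_left: "dim_vec g = dim_vec f \<Longrightarrow> ip (f + g) h = ip f h + ip g h"
  unfolding ip_def by (simp add: algebra_simps sum.distrib)

lemma ip_add_right: "dim_vec g = dim_vec f \<Longrightarrow> dim_vec h = dim_vec f \<Longrightarrow> ip f (g + h) = ip f g + ip f h"
  unfolding ip_def by (simp add: algebra_simps sum.distrib)

lemma ip_zero_right [simp]: "dim_vec f = n \<Longrightarrow> ip f (0\<^sub>v n) = 0"
  unfolding ip_def by simp

lemma ip_zero_left [simp]: "ip (0\<^sub>v n) f = 0"
  unfolding ip_def by simp

lemma ip_unit_vec_left:
  assumes "k < n"
  shows "ip (unit_vec n k) g = cnj (g $ k)"
proof -
  have "ip (unit_vec n k) g = (\<Sum>l<n. if l = k then cnj (g $ k) else 0)"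
    unfolding ip_def by (intro sum.cong) (auto simp: unit_vec_def)
  then show ?thesis
    using assms by simp
qed

lemma ip_lincomb_left:
  assumes z: "\<forall>i<N. z i \<in> carrier_vec n"
  shows "ip (vec n (\<lambda>j. \<Sum>i<N. c i * z i $ j)) b = (\<Sum>i<N. c i * ip (z i) b)"
proof -
  have "ip (vec n (\<lambda>j. \<Sum>i<N. c i * z i $ j)) b = (\<Sum>j<n. \<Sum>i<N. c i * z i $ j * cnj (b $ j))"
    unfolding ip_def by (simp add: sum_distrib_right)
  also have "\<dots> = (\<Sum>i<N. \<Sum>j<n. c i * z i $ j * cnj (b $ j))"
    by (rule sum.swap)
  also have "\<dots> = (\<Sum>i<N. c i * ip (z i) b)"
  proof (intro sum.cong refl)
    fix i assume "i \<in> {..<N}"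
    then have "dim_vec (z i) = n"
      using z by auto
    then show "(\<Sum>j<n. c i * z i $ j * cnj (b $ j)) = c i * ip (z i) b"
      unfolding ip_def by (simp add: sum_distrib_left mult.assoc)
  qed
  finally show ?thesis .
qed

lemma cmod_ip_le:
  assumes "dim_vec g = dim_vec f"
  shows "cmod (ip f g) \<le> vnorm f * vnorm g"
proof (rule power2_le_imp_le)
  show "(cmod (ip f g))\<^sup>2 \<le> (vnorm f * vnorm g)\<^sup>2"
    using cmod_sum_mult_power2_le[of "\<lambda>k. f $ k" "\<lambda>k. cnj (g $ k)" "{..<dim_vec f}"] assms
    unfolding ip_def power_mult_distrib vnorm_power2 by simp
qed (simp add: vnorm_nonneg)

lemma sum_cmod_ip_power2_le:
  assumes "\<forall>i<N. dim_vec (F i) = dim_vec f"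
  shows "(\<Sum>i<N. (cmod (ip f (F i)))\<^sup>2) \<le> (\<Sum>i<N. (vnorm (F i))\<^sup>2) * (vnorm f)\<^sup>2"
proof -
  have "(\<Sum>i<N. (cmod (ip f (F i)))\<^sup>2) \<le> (\<Sum>i<N. (vnorm f * vnorm (F i))\<^sup>2)"
    using assms cmod_ip_le by (intro sum_mono power_mono) auto
  also have "\<dots> = (\<Sum>i<N. (vnorm (F i))\<^sup>2) * (vnorm f)\<^sup>2"
    unfolding sum_distrib_right power_mult_distrib by (simp add: mult.commute)
  finally show ?thesis .
qed

lemma mult_mat_vec_lincomb:
  fixes B :: "complex mat"
  assumes B: "B \<in> carrier_mat n n" and z: "\<forall>i<N. z i \<in> carrier_vec n"
  shows "B *\<^sub>v vec n (\<lambda>k. \<Sum>i<N. c i * z i $ k) = vec n (\<lambda>j. \<Sum>i<N. c i * (B *\<^sub>v z i) $ j)"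
proof (rule eq_vecI)
  fix j assume "j < dim_vec (vec n (\<lambda>j. \<Sum>i<N. c i * (B *\<^sub>v z i) $ j))"
  then have j: "j < n" by simp
  have "(B *\<^sub>v vec n (\<lambda>k. \<Sum>i<N. c i * z i $ k)) $ j = (\<Sum>k<n. B $$ (j, k) * (\<Sum>i<N. c i * z i $ k))"
    using B j by (simp add: scalar_prod_def lessThan_atLeast0)
  also have "\<dots> = (\<Sum>k<n. \<Sum>i<N. c i * (B $$ (j, k) * z i $ k))"
    by (intro sum.cong refl) (simp add: sum_distrib_left mult_ac)
  also have "\<dots> = (\<Sum>i<N. \<Sum>k<n. c i * (B $$ (j, k) * z i $ k))"
    by (rule sum.swap)
  also have "\<dots> = (\<Sum>i<N. c i * (B *\<^sub>v z i) $ j)"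
  proof (intro sum.cong refl)
    fix i assume "i \<in> {..<N}"
    then have "dim_vec (z i) = n"
      using z by auto
    then show "(\<Sum>k<n. c i * (B $$ (j, k) * z i $ k)) = c i * (B *\<^sub>v z i) $ j"
      using B j by (simp add: scalar_prod_def lessThan_atLeast0 sum_distrib_left)
  qed
  finally show "(B *\<^sub>v vec n (\<lambda>k. \<Sum>i<N. c i * z i $ k)) $ j = vec n (\<lambda>j. \<Sum>i<N. c i * (B *\<^sub>v z i) $ j) $ j"
    using j by simp
qed (use B in simp)

lemma mult_mat_vec_conjugate:
  fixes M :: "complex mat"
  assumes M: "M \<in> carrier_mat n n" and real: "\<And>j k. j < n \<Longrightarrow> k < n \<Longrightarrow> M $$ (j, k) \<in> \<real>"
    and v: "v \<in> carrier_vec n"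
  shows "M *\<^sub>v conjugate v = conjugate (M *\<^sub>v v)"
proof (rule eq_vecI)
  fix j assume "j < dim_vec (conjugate (M *\<^sub>v v))"
  then have j: "j < n"
    using M by simp
  have "(M *\<^sub>v conjugate v) $ j = (\<Sum>k<n. M $$ (j, k) * cnj (v $ k))"
    using M j v by (simp add: scalar_prod_def lessThan_atLeast0)
  also have "\<dots> = (\<Sum>k<n. cnj (M $$ (j, k) * v $ k))"
  proof (intro sum.cong refl)
    fix k assume "k \<in> {..<n}"
    then have "cnj (M $$ (j, k)) = M $$ (j, k)"
      using real[OF j] Reals_cnj_iff by blast
    then show "M $$ (j, k) * cnj (v $ k) = cnj (M $$ (j, k) * v $ k)"
      by simp
  qed
  also have "\<dots> = conjugate (M *\<^sub>v v) $ j"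
    using M j v by (simp add: scalar_prod_def lessThan_atLeast0 cnj_sum)
  finally show "(M *\<^sub>v conjugate v) $ j = conjugate (M *\<^sub>v v) $ j" .
qed (use M in simp)

lemma mult_mat_vec_bij_betw:
  fixes M :: "'a :: field mat"
  assumes M: "M \<in> carrier_mat n n"
    and ker: "\<And>a. a \<in> carrier_vec n \<Longrightarrow> M *\<^sub>v a = 0\<^sub>v n \<Longrightarrow> a = 0\<^sub>v n"
  shows "bij_betw ((*\<^sub>v) M) (carrier_vec n) (carrier_vec n)"
proof -
  have "det M \<noteq> 0"
    using det_0_iff_vec_prod_zero_field[OF M] ker by blast
  from det_non_zero_imp_unit[OF M this, of "()"]
  obtain B where B: "B \<in> carrier_mat n n" and MB: "M * B = 1\<^sub>m n"
    unfolding Units_def ring_mat_def by auto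
  have "inj_on ((*\<^sub>v) M) (carrier_vec n)"
  proof (rule inj_onI)
    fix a b assume a: "a \<in> carrier_vec n" and b: "b \<in> carrier_vec n" and eq: "M *\<^sub>v a = M *\<^sub>v b"
    have "M *\<^sub>v (a - b) = M *\<^sub>v a - M *\<^sub>v b"
      by (rule mult_minus_distrib_mat_vec[OF M a b])
    also have "\<dots> = 0\<^sub>v n"
      unfolding eq using M b by (intro minus_cancel_vec) simp
    finally have "a - b = 0\<^sub>v n"
      by (rule ker[rotated]) (use a b in simp)
    show "a = b"
    proof (rule eq_vecI)
      fix i assume i: "i < dim_vec b"
      have "(a - b) $ i = 0"
        using i b \<open>a - b = 0\<^sub>v n\<close> by simp
      then show "a $ i = b $ i"
        using a b i by simp
    qed (use a b in simp)
  qed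
  moreover have "b \<in> (*\<^sub>v) M ` carrier_vec n" if b: "b \<in> carrier_vec n" for b
  proof
    show "b = M *\<^sub>v (B *\<^sub>v b)"
      using assoc_mult_mat_vec[OF M B b] MB b by simp
  qed (use B b in simp)
  ultimately show ?thesis
    unfolding bij_betw_def using M by auto
qed

lemma Hvecs_carrier: "f \<in> Hvecs K n \<Longrightarrow> f \<in> carrier_vec n"
  unfolding Hvecs_def by auto

lemma Hvecs_UNIV: "Hvecs UNIV n = carrier_vec n"
  unfolding Hvecs_def by auto

lemma zero_in_Hvecs: "K = \<real> \<or> K = UNIV \<Longrightarrow> 0\<^sub>v n \<in> Hvecs K n"
  unfolding Hvecs_def by auto

lemma unit_vec_in_Hvecs: "K = \<real> \<or> K = UNIV \<Longrightarrow> k < n \<Longrightarrow> unit_vec n k \<in> Hvecs K n"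
  unfolding Hvecs_def by (auto simp: unit_vec_def)

lemma smult_in_Hvecs: "K = \<real> \<or> K = UNIV \<Longrightarrow> c \<in> K \<Longrightarrow> f \<in> Hvecs K n \<Longrightarrow> c \<cdot>\<^sub>v f \<in> Hvecs K n"
  unfolding Hvecs_def by (auto intro: Reals_mult)

lemma add_in_Hvecs: "K = \<real> \<or> K = UNIV \<Longrightarrow> f \<in> Hvecs K n \<Longrightarrow> g \<in> Hvecs K n \<Longrightarrow> f + g \<in> Hvecs K n"
  unfolding Hvecs_def by (auto intro: Reals_add)

lemma op_norm_eqI:
  assumes "\<And>f. f \<in> Hvecs K n \<Longrightarrow> vnorm f \<le> 1 \<Longrightarrow> vnorm (M *\<^sub>v f) \<le> C"
    and "f0 \<in> Hvecs K n" "vnorm f0 \<le> 1" "vnorm (M *\<^sub>v f0) = C"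
  shows "op_norm K n M = C"
  unfolding op_norm_def
proof (rule cSup_eq_maximum)
  show "C \<in> {vnorm (M *\<^sub>v f) |f. f \<in> Hvecs K n \<and> vnorm f \<le> 1}"
    using assms(2-4) by force
qed (use assms(1) in force)

section \<open>Rank-one operators and one-element error operators\<close>

definition outer_mat :: "nat \<Rightarrow> complex vec \<Rightarrow> complex vec \<Rightarrow> complex mat" where
  "outer_mat n y x = mat n n (\<lambda>(j, k). y $ j * cnj (x $ k))"

lemma outer_mat_carrier [simp]: "outer_mat n y x \<in> carrier_mat n n"
  unfolding outer_mat_def by simp

lemma dim_outer_mat [simp]:
  "dim_row (outer_mat n y x) = n" "dim_col (outer_mat n y x) = n"
  unfolding outer_mat_def by simp_all

lemma outer_mat_mult_vec:
  assumes "v \<in> carrier_vec n" "y \<in> carrier_vec n"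
  shows "outer_mat n y x *\<^sub>v v = ip v x \<cdot>\<^sub>v y"
proof (rule eq_vecI)
  fix j assume "j < dim_vec (ip v x \<cdot>\<^sub>v y)"
  then have "j < n"
    using assms by simp
  then show "(outer_mat n y x *\<^sub>v v) $ j = (ip v x \<cdot>\<^sub>v y) $ j"
    using assms unfolding outer_mat_def ip_def
    by (simp add: scalar_prod_def sum_distrib_left lessThan_atLeast0 algebra_simps)
qed (use assms in \<open>simp add: outer_mat_def\<close>)

lemma norming_vec_exists:
  assumes K: "K = \<real> \<or> K = UNIV" and x: "x \<in> Hvecs K n"
  obtains f where "f \<in> Hvecs K n" "vnorm f \<le> 1" "cmod (ip f x) = vnorm x"
proof (cases "x = 0\<^sub>v n")
  case True
  then show ?thesis
    using that[of "0\<^sub>v n"] zero_in_Hvecs[OF K] by simp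
next
  case False
  then have pos: "0 < vnorm x"
    using vnorm_pos Hvecs_carrier[OF x] by blast
  let ?f = "of_real (1 / vnorm x) \<cdot>\<^sub>v x"
  have "?f \<in> Hvecs K n"
    using K x by (intro smult_in_Hvecs) auto
  moreover have "vnorm ?f = 1"
    using pos by (simp add: vnorm_smult norm_divide)
  moreover have "cmod (ip ?f x) = vnorm x"
    using pos by (simp add: ip_smult_left ip_self norm_mult power2_eq_square)
  ultimately show ?thesis
    using that by simp
qed

lemma op_norm_outer_mat:
  assumes K: "K = \<real> \<or> K = UNIV" and x: "x \<in> Hvecs K n" and y: "y \<in> carrier_vec n"
  shows "op_norm K n (outer_mat n y x) = vnorm x * vnorm y"
proof -
  have xc: "x \<in> carrier_vec n"
    using x by (rule Hvecs_carrier)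
  have image: "vnorm (outer_mat n y x *\<^sub>v f) = cmod (ip f x) * vnorm y" if "f \<in> carrier_vec n" for f
    using that y by (simp add: outer_mat_mult_vec vnorm_smult)
  obtain f0 where f0: "f0 \<in> Hvecs K n" "vnorm f0 \<le> 1" "cmod (ip f0 x) = vnorm x"
    using norming_vec_exists[OF K x] .
  show ?thesis
  proof (rule op_norm_eqI)
    fix f assume f: "f \<in> Hvecs K n" "vnorm f \<le> 1"
    have fc: "f \<in> carrier_vec n"
      using f(1) by (rule Hvecs_carrier)
    have "cmod (ip f x) \<le> vnorm f * vnorm x"
      using fc xc by (intro cmod_ip_le) simp
    also have "\<dots> \<le> vnorm x"
      using f(2) by (intro mult_left_le_one_le) (simp_all add: vnorm_nonneg)
    finally show "vnorm (outer_mat n y x *\<^sub>v f) \<le> vnorm x * vnorm y"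
      unfolding image[OF fc] by (intro mult_right_mono) (simp_all add: vnorm_nonneg)
  next
    show "vnorm (outer_mat n y x *\<^sub>v f0) = vnorm x * vnorm y"
      using image f0 Hvecs_carrier by simp
  qed (use f0 in auto)
qed

lemma spectral_radius_nonneg:
  assumes "A \<in> carrier_mat n n" "0 < n"
  shows "0 \<le> spectral_radius A"
  using spectral_radius_mem_max(1)[OF assms] by auto

lemma spectral_radius_outer_mat_le:
  assumes n: "0 < n" and x: "x \<in> carrier_vec n" and y: "y \<in> carrier_vec n"
  shows "spectral_radius (outer_mat n y x) \<le> vnorm x * vnorm y"
proof -
  obtain l where l: "l \<in> spectrum (outer_mat n y x)" and r: "spectral_radius (outer_mat n y x) = cmod l"
    using spectral_radius_mem_max(1)[OF outer_mat_carrier n] by auto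
  then obtain v where "eigenvector (outer_mat n y x) v l"
    unfolding spectrum_def eigenvalue_def by auto
  then have v: "v \<in> carrier_vec n" "v \<noteq> 0\<^sub>v n" and ev: "ip v x \<cdot>\<^sub>v y = l \<cdot>\<^sub>v v"
    unfolding eigenvector_def using y by (auto simp: outer_mat_mult_vec)
  have "cmod l * vnorm v = vnorm (ip v x \<cdot>\<^sub>v y)"
    unfolding ev by (simp add: vnorm_smult)
  also have "\<dots> = cmod (ip v x) * vnorm y"
    by (simp add: vnorm_smult)
  also have "\<dots> \<le> vnorm v * vnorm x * vnorm y"
    using v x by (intro mult_right_mono cmod_ip_le) (simp_all add: vnorm_nonneg)
  finally have "cmod l * vnorm v \<le> (vnorm x * vnorm y) * vnorm v"
    by (simp add: algebra_simps)
  then show ?thesis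
    using r vnorm_pos[OF v] by simp
qed

lemma cmod_ip_le_spectral_radius_outer_mat:
  assumes n: "0 < n" and y: "y \<in> carrier_vec n"
  shows "cmod (ip y x) \<le> spectral_radius (outer_mat n y x)"
proof (cases "ip y x = 0")
  case True
  then show ?thesis
    using spectral_radius_nonneg[OF outer_mat_carrier n] by simp
next
  case False
  then have "y \<noteq> 0\<^sub>v n"
    by auto
  then have "eigenvector (outer_mat n y x) y (ip y x)"
    unfolding eigenvector_def using y by (simp add: outer_mat_mult_vec)
  then have "ip y x \<in> spectrum (outer_mat n y x)"
    unfolding spectrum_def eigenvalue_def by auto
  then show ?thesis
    using spectral_radius_mem_max(2)[OF outer_mat_carrier n] by auto
qed

lemma weight_nonneg:
  assumes "is_prob_seq N p" "i < N"
  shows "0 \<le> weight N n p i"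
proof -
  have "(\<Sum>j<N. p j) = 1" "p i \<le> 1"
    using assms unfolding is_prob_seq_def by auto
  then show ?thesis
    unfolding weight_def using assms(2) by (intro divide_nonneg_nonneg mult_nonneg_nonneg) auto
qed

lemma error_op_singleton:
  "G i \<in> carrier_vec n \<Longrightarrow> error_op N n p {i} F G = outer_mat n (of_real (weight N n p i) \<cdot>\<^sub>v G i) (F i)"
  unfolding error_op_def outer_mat_def by (rule eq_matI) auto

lemma op_norm_error_op_singleton:
  assumes K: "K = \<real> \<or> K = UNIV" and P: "is_prob_seq N p" and i: "i < N"
    and F: "F i \<in> Hvecs K n" and G: "G i \<in> carrier_vec n"
  shows "op_norm K n (error_op N n p {i} F G) = weight N n p i * vnorm (F i) * vnorm (G i)"
  using op_norm_outer_mat[OF K F, of "of_real (weight N n p i) \<cdot>\<^sub>v G i"] weight_nonneg[OF P i] G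
  by (simp add: error_op_singleton vnorm_smult)

lemma spectral_radius_error_op_singleton_le:
  assumes n: "0 < n" and P: "is_prob_seq N p" and i: "i < N"
    and F: "F i \<in> carrier_vec n" and G: "G i \<in> carrier_vec n"
  shows "spectral_radius (error_op N n p {i} F G) \<le> weight N n p i * vnorm (F i) * vnorm (G i)"
  using spectral_radius_outer_mat_le[OF n F, of "of_real (weight N n p i) \<cdot>\<^sub>v G i"] weight_nonneg[OF P i] G
  by (simp add: error_op_singleton vnorm_smult mult_ac)

lemma spectral_radius_error_op_singleton_ge:
  assumes n: "0 < n" and P: "is_prob_seq N p" and i: "i < N" and G: "G i \<in> carrier_vec n"
  shows "weight N n p i * cmod (ip (G i) (F i)) \<le> spectral_radius (error_op N n p {i} F G)"
  using cmod_ip_le_spectral_radius_outer_mat[OF n, of "of_real (weight N n p i) \<cdot>\<^sub>v G i" "F i"]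
    weight_nonneg[OF P i] G
  by (simp add: error_op_singleton ip_smult_left norm_mult)

lemma Max_image_mono:
  fixes f g :: "'a \<Rightarrow> 'b :: linorder"
  assumes A: "finite A" "A \<noteq> {}" and le: "\<And>i. i \<in> A \<Longrightarrow> f i \<le> g i"
  shows "Max (f ` A) \<le> Max (g ` A)"
proof (rule Max.boundedI)
  fix y assume "y \<in> f ` A"
  then obtain i where i: "i \<in> A" and y: "y = f i"
    by auto
  have "f i \<le> g i"
    using le[OF i] .
  also have "\<dots> \<le> Max (g ` A)"
    using A i by (intro Max_ge) auto
  finally show "y \<le> Max (g ` A)"
    unfolding y .
qed (use A in auto)

lemma O1_eq_Max: "O1 K n N p F G = Max ((\<lambda>i. op_norm K n (error_op N n p {i} F G)) ` {..<N})"
  unfolding O1_def by (rule arg_cong[where f = Max]) (auto simp: card_1_singleton_iff)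

lemma A1_eq_Max:
  "A1 K n N p F G = Max ((\<lambda>i. (op_norm K n (error_op N n p {i} F G)
     + spectral_radius (error_op N n p {i} F G)) / 2) ` {..<N})"
  unfolding A1_def by (rule arg_cong[where f = Max]) (auto simp: card_1_singleton_iff)

lemma A1_le_O1:
  assumes K: "K = \<real> \<or> K = UNIV" and n: "0 < n" and P: "is_prob_seq N p"
    and F: "\<forall>i<N. F i \<in> Hvecs K n" and G: "\<forall>i<N. G i \<in> carrier_vec n"
  shows "A1 K n N p F G \<le> O1 K n N p F G"
proof -
  have "spectral_radius (error_op N n p {i} F G) \<le> op_norm K n (error_op N n p {i} F G)" if i: "i < N" for i
  proof -
    have "F i \<in> Hvecs K n" "G i \<in> carrier_vec n"
      using F G i by auto
    then show ?thesis
      using spectral_radius_error_op_singleton_le[OF n P i Hvecs_carrier] op_norm_error_op_singleton[OF K P i]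
      by simp
  qed
  then have "(op_norm K n (error_op N n p {i} F G) + spectral_radius (error_op N n p {i} F G)) / 2
      \<le> op_norm K n (error_op N n p {i} F G)" if "i < N" for i
    using that by fastforce
  then show ?thesis
    unfolding A1_eq_Max O1_eq_Max by (cases "N = 0") (auto intro: Max_image_mono)
qed

lemma A1_nonneg:
  assumes K: "K = \<real> \<or> K = UNIV" and n: "0 < n" and P: "is_prob_seq N p" and N: "0 < N"
    and F: "\<forall>i<N. F i \<in> Hvecs K n" and G: "\<forall>i<N. G i \<in> carrier_vec n"
  shows "0 \<le> A1 K n N p F G"
proof -
  have "0 \<le> op_norm K n (error_op N n p {0} F G)"
    using op_norm_error_op_singleton[OF K P N] weight_nonneg[OF P N] F G N
    by (simp add: vnorm_nonneg)
  moreover have "0 \<le> spectral_radius (error_op N n p {0} F G)"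
    using spectral_radius_nonneg[OF _ n] error_op_def by simp
  ultimately have "0 \<le> (op_norm K n (error_op N n p {0} F G) + spectral_radius (error_op N n p {0} F G)) / 2"
    by simp
  also have "\<dots> \<le> A1 K n N p F G"
    unfolding A1_eq_Max using N by (intro Max_ge) auto
  finally show ?thesis .
qed

(* The matrix of f \<mapsto> \<Sum>i. <f, f_i> g_i. Thus frame_mat n N F F represents the frame operator
   S_F, and frame_mat n N G F is the identity for a dual pair (F, G). *)
definition frame_mat :: "nat \<Rightarrow> nat \<Rightarrow> (nat \<Rightarrow> complex vec) \<Rightarrow> (nat \<Rightarrow> complex vec) \<Rightarrow> complex mat" where
  "frame_mat n N G F = mat n n (\<lambda>(j, k). \<Sum>i<N. G i $ j * cnj (F i $ k))"

lemma frame_mat_carrier [simp]: "frame_mat n N G F \<in> carrier_mat n n"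
  unfolding frame_mat_def by simp

lemma dim_frame_mat [simp]:
  "dim_row (frame_mat n N G F) = n" "dim_col (frame_mat n N G F) = n"
  unfolding frame_mat_def by simp_all

lemma frame_mat_mult_vec:
  assumes G: "\<forall>i<N. G i \<in> carrier_vec n" and a: "a \<in> carrier_vec n"
  shows "frame_mat n N G F *\<^sub>v a = vec n (\<lambda>j. \<Sum>i<N. ip a (F i) * G i $ j)"
proof (rule eq_vecI)
  fix j assume "j < dim_vec (vec n (\<lambda>j. \<Sum>i<N. ip a (F i) * G i $ j))"
  then have j: "j < n"
    by simp
  have "(frame_mat n N G F *\<^sub>v a) $ j = (\<Sum>k<n. (\<Sum>i<N. G i $ j * cnj (F i $ k)) * a $ k)"
    using j a by (simp add: frame_mat_def scalar_prod_def lessThan_atLeast0)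
  also have "\<dots> = (\<Sum>k<n. \<Sum>i<N. a $ k * cnj (F i $ k) * G i $ j)"
    by (intro sum.cong refl) (simp add: sum_distrib_left sum_distrib_right mult_ac)
  also have "\<dots> = (\<Sum>i<N. \<Sum>k<n. a $ k * cnj (F i $ k) * G i $ j)"
    by (rule sum.swap)
  also have "\<dots> = (\<Sum>i<N. ip a (F i) * G i $ j)"
    unfolding ip_def using a by (simp add: sum_distrib_right)
  finally show "(frame_mat n N G F *\<^sub>v a) $ j = vec n (\<lambda>j. \<Sum>i<N. ip a (F i) * G i $ j) $ j"
    using j by simp
qed (simp add: frame_mat_def)

lemma finsum_vec_smult:
  fixes z :: "nat \<Rightarrow> complex vec"
  assumes "\<forall>i<N. z i \<in> carrier_vec n"
  shows "finsum_vec TYPE(complex) n (\<lambda>i. c i \<cdot>\<^sub>v z i) {..<N} = vec n (\<lambda>j. \<Sum>i<N. c i * z i $ j)"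
proof (rule eq_vecI)
  show "dim_vec (finsum_vec TYPE(complex) n (\<lambda>i. c i \<cdot>\<^sub>v z i) {..<N}) = dim_vec (vec n (\<lambda>j. \<Sum>i<N. c i * z i $ j))"
    using assms finsum_vec_closed[of "\<lambda>i. c i \<cdot>\<^sub>v z i" "{..<N}" n] by auto
  fix j assume "j < dim_vec (vec n (\<lambda>j. \<Sum>i<N. c i * z i $ j))"
  then have j: "j < n"
    by simp
  have "finsum_vec TYPE(complex) n (\<lambda>i. c i \<cdot>\<^sub>v z i) {..<N} $ j = (\<Sum>i<N. (c i \<cdot>\<^sub>v z i) $ j)"
    using assms j by (subst index_finsum_vec) auto
  also have "\<dots> = (\<Sum>i<N. c i * z i $ j)"
  proof (intro sum.cong refl)
    fix i assume "i \<in> {..<N}"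
    then show "(c i \<cdot>\<^sub>v z i) $ j = c i * z i $ j"
      using assms j by auto
  qed
  finally show "finsum_vec TYPE(complex) n (\<lambda>i. c i \<cdot>\<^sub>v z i) {..<N} $ j = vec n (\<lambda>j. \<Sum>i<N. c i * z i $ j) $ j"
    using j by simp
qed

lemma frame_op_eq_frame_mat:
  assumes "\<forall>i<N. F i \<in> carrier_vec n" "a \<in> carrier_vec n"
  shows "frame_op n N F a = frame_mat n N F F *\<^sub>v a"
  unfolding frame_op_def using assms by (simp add: finsum_vec_smult frame_mat_mult_vec)

lemma ip_frame_op_left:
  assumes "\<forall>i<N. F i \<in> carrier_vec n" "a \<in> carrier_vec n"
  shows "ip (frame_op n N F a) b = (\<Sum>i<N. ip a (F i) * ip (F i) b)"
  using assms by (simp add: frame_op_eq_frame_mat frame_mat_mult_vec ip_lincomb_left)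

lemma ip_frame_op_right:
  assumes F: "\<forall>i<N. F i \<in> carrier_vec n" and a: "a \<in> carrier_vec n" and b: "b \<in> carrier_vec n"
  shows "ip a (frame_op n N F b) = (\<Sum>i<N. ip a (F i) * ip (F i) b)"
proof -
  have "ip a (frame_op n N F b) = cnj (ip (frame_op n N F b) a)"
    by (rule ip_commute) (simp add: frame_op_eq_frame_mat F a b)
  also have "\<dots> = (\<Sum>i<N. cnj (ip b (F i)) * cnj (ip (F i) a))"
    unfolding ip_frame_op_left[OF F b] by simp
  also have "\<dots> = (\<Sum>i<N. ip a (F i) * ip (F i) b)"
  proof (intro sum.cong refl)
    fix i assume "i \<in> {..<N}"
    then have "dim_vec (F i) = n"
      using F by auto
    then show "cnj (ip b (F i)) * cnj (ip (F i) a) = ip a (F i) * ip (F i) b"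
      using a b ip_commute[of "F i" b] ip_commute[of a "F i"] by simp
  qed
  finally show ?thesis .
qed

lemma ip_frame_op_self:
  assumes "\<forall>i<N. F i \<in> carrier_vec n" "a \<in> carrier_vec n"
  shows "ip (frame_op n N F a) a = of_real (\<Sum>i<N. (cmod (ip a (F i)))\<^sup>2)"
proof -
  have "ip (frame_op n N F a) a = (\<Sum>i<N. ip a (F i) * ip (F i) a)"
    by (rule ip_frame_op_left[OF assms])
  also have "\<dots> = of_real (\<Sum>i<N. (cmod (ip a (F i)))\<^sup>2)"
    unfolding of_real_sum
  proof (intro sum.cong refl)
    fix i assume "i \<in> {..<N}"
    then have "dim_vec (F i) = dim_vec a"
      using assms by auto
    then have "ip (F i) a = cnj (ip a (F i))"
      by (rule ip_commute)
    then show "ip a (F i) * ip (F i) a = of_real ((cmod (ip a (F i)))\<^sup>2)"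
      by (simp only: complex_norm_square)
  qed
  finally show ?thesis .
qed

lemma canon_dual_eqI:
  assumes "inj_on (frame_op n N F) (carrier_vec n)" "g \<in> carrier_vec n" "frame_op n N F g = F i"
  shows "canon_dual n N F i = g"
  unfolding canon_dual_def
proof (rule the_equality)
  fix h assume "h \<in> carrier_vec n \<and> frame_op n N F h = F i"
  then show "h = g"
    using inj_onD[OF assms(1), of h g] assms(2,3) by simp
qed (use assms(2,3) in simp)

lemma frame_mat_dual_eq_one:
  assumes K: "K = \<real> \<or> K = UNIV" and F: "\<forall>i<N. F i \<in> carrier_vec n"
    and D: "is_dual K n N F G"
  shows "frame_mat n N G F = 1\<^sub>m n"
proof (rule eq_matI)
  have G: "\<forall>i<N. G i \<in> carrier_vec n"
    using D Hvecs_carrier unfolding is_dual_def is_frame_def by blast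
  fix j k assume "j < dim_row (1\<^sub>m n :: complex mat)" "k < dim_col (1\<^sub>m n :: complex mat)"
  then have j: "j < n" and k: "k < n"
    by auto
  have "unit_vec n k = finsum_vec TYPE(complex) n (\<lambda>i. ip (unit_vec n k) (F i) \<cdot>\<^sub>v G i) {..<N}"
    using D unit_vec_in_Hvecs[OF K k] unfolding is_dual_def by blast
  also have "\<dots> = frame_mat n N G F *\<^sub>v unit_vec n k"
    using G by (simp add: finsum_vec_smult frame_mat_mult_vec)
  finally have col: "frame_mat n N G F *\<^sub>v unit_vec n k = unit_vec n k"
    by simp
  have "frame_mat n N G F $$ (j, k) = (frame_mat n N G F *\<^sub>v unit_vec n k) $ j"
    using j k G by (simp add: frame_mat_mult_vec frame_mat_def ip_unit_vec_left mult.commute)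
  then show "frame_mat n N G F $$ (j, k) = 1\<^sub>m n $$ (j, k)"
    using j k by (simp add: col)
qed auto

lemma is_frameI:
  assumes F: "\<forall>i<N. F i \<in> Hvecs K n" and A: "0 < A"
    and lower: "\<forall>f\<in>Hvecs K n. A * (vnorm f)\<^sup>2 \<le> (\<Sum>i<N. (cmod (ip f (F i)))\<^sup>2)"
  shows "is_frame K n N F"
proof -
  let ?B = "1 + (\<Sum>i<N. (vnorm (F i))\<^sup>2)"
  have "(\<Sum>i<N. (cmod (ip f (F i)))\<^sup>2) \<le> ?B * (vnorm f)\<^sup>2" if f: "f \<in> Hvecs K n" for f
  proof -
    have "(\<Sum>i<N. (cmod (ip f (F i)))\<^sup>2) \<le> (\<Sum>i<N. (vnorm (F i))\<^sup>2) * (vnorm f)\<^sup>2"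
      using F f by (intro sum_cmod_ip_power2_le) (auto dest!: Hvecs_carrier)
    also have "\<dots> \<le> ?B * (vnorm f)\<^sup>2"
      by (intro mult_right_mono) auto
    finally show ?thesis .
  qed
  moreover have "0 < ?B"
    by (simp add: add_pos_nonneg sum_nonneg)
  ultimately show ?thesis
    unfolding is_frame_def using F A lower by blast
qed

lemma is_frame_N_pos:
  assumes K: "K = \<real> \<or> K = UNIV" and n: "0 < n" and F: "is_frame K n N F"
  shows "0 < N"
proof (rule ccontr)
  assume "\<not> 0 < N"
  then have "N = 0"
    by simp
  moreover obtain A where "0 < A" "\<forall>f\<in>Hvecs K n. A * (vnorm f)\<^sup>2 \<le> (\<Sum>i<N. (cmod (ip f (F i)))\<^sup>2)"
    using F unfolding is_frame_def by auto
  ultimately show False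
    using unit_vec_in_Hvecs[OF K n] n by (force simp: vnorm_unit_vec)
qed

lemma reconstruction_lower_bound:
  assumes U: "\<forall>i<N. U i \<in> carrier_vec n" and f: "f \<in> carrier_vec n"
    and rec: "f = vec n (\<lambda>j. \<Sum>i<N. ip f (V i) * U i $ j)"
  shows "(vnorm f)\<^sup>2 \<le> (\<Sum>i<N. (vnorm (U i))\<^sup>2) * (\<Sum>i<N. (cmod (ip f (V i)))\<^sup>2)"
proof -
  let ?D = "\<Sum>i<N. (vnorm (U i))\<^sup>2" and ?X = "\<Sum>i<N. (cmod (ip f (V i)))\<^sup>2"
  have "of_real ((vnorm f)\<^sup>2) = ip (vec n (\<lambda>j. \<Sum>i<N. ip f (V i) * U i $ j)) f"
    unfolding ip_self[symmetric] using rec by (rule arg_cong[where f = "\<lambda>x. ip x f"])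
  also have "\<dots> = (\<Sum>i<N. ip f (V i) * ip (U i) f)"
    using U by (rule ip_lincomb_left)
  finally have "of_real ((vnorm f)\<^sup>2) = (\<Sum>i<N. ip f (V i) * ip (U i) f)" .
  then have "(vnorm f)\<^sup>2 = cmod (\<Sum>i<N. ip f (V i) * ip (U i) f)"
    by (metis abs_power2 norm_of_real)
  then have "((vnorm f)\<^sup>2)\<^sup>2 \<le> ?X * (\<Sum>i<N. (cmod (ip (U i) f))\<^sup>2)"
    using cmod_sum_mult_power2_le by simp
  also have "\<dots> \<le> ?X * (?D * (vnorm f)\<^sup>2)"
  proof (intro mult_left_mono)
    have "(\<Sum>i<N. (cmod (ip (U i) f))\<^sup>2) = (\<Sum>i<N. (cmod (ip f (U i)))\<^sup>2)"
      using U f by (intro sum.cong refl) (simp add: ip_commute[of "U _" f])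
    also have "\<dots> \<le> ?D * (vnorm f)\<^sup>2"
      using U f by (intro sum_cmod_ip_power2_le) auto
    finally show "(\<Sum>i<N. (cmod (ip (U i) f))\<^sup>2) \<le> ?D * (vnorm f)\<^sup>2" .
  qed (simp add: sum_nonneg)
  finally have "(vnorm f)\<^sup>2 * (vnorm f)\<^sup>2 \<le> (?D * ?X) * (vnorm f)\<^sup>2"
    by (simp add: power2_eq_square mult_ac)
  show ?thesis
  proof (cases "vnorm f = 0")
    case False
    then have "0 < (vnorm f)\<^sup>2"
      by simp
    with \<open>(vnorm f)\<^sup>2 * (vnorm f)\<^sup>2 \<le> (?D * ?X) * (vnorm f)\<^sup>2\<close> show ?thesis
      by (rule mult_right_le_imp_le)
  qed (simp add: sum_nonneg)
qed

section \<open>Tight frames\<close>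

lemma cmod_add_power2: "(cmod (z + w))\<^sup>2 = (cmod z)\<^sup>2 + (cmod w)\<^sup>2 + 2 * Re (z * cnj w)"
  unfolding cmod_power2 by (simp add: power2_eq_square algebra_simps)

lemma vnorm_unit_vec_add_smult:
  assumes j: "j < n" and k: "k < n" and jk: "j \<noteq> k"
  shows "(vnorm (unit_vec n j + c \<cdot>\<^sub>v unit_vec n k))\<^sup>2 = 1 + (cmod c)\<^sup>2"
proof -
  have "(vnorm (unit_vec n j + c \<cdot>\<^sub>v unit_vec n k))\<^sup>2
      = (\<Sum>l<n. (if l = j then 1 else 0) + (if l = k then (cmod c)\<^sup>2 else 0))"
    unfolding vnorm_power2 using jk by (intro sum.cong) (auto simp: unit_vec_def)
  also have "\<dots> = 1 + (cmod c)\<^sup>2"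
    using j k by (simp add: sum.distrib)
  finally show ?thesis .
qed

context
  fixes K :: "complex set" and n N :: nat and F :: "nat \<Rightarrow> complex vec" and A :: real
  assumes K: "K = \<real> \<or> K = UNIV"
    and F: "\<forall>i<N. F i \<in> Hvecs K n"
    and tight: "\<forall>f\<in>Hvecs K n. (\<Sum>i<N. (cmod (ip f (F i)))\<^sup>2) = A * (vnorm f)\<^sup>2"
begin

lemma tight_frame_diag:
  assumes l: "l < n"
  shows "(\<Sum>i<N. (cmod (F i $ l))\<^sup>2) = A"
proof -
  have "(\<Sum>i<N. (cmod (ip (unit_vec n l) (F i)))\<^sup>2) = A * (vnorm (unit_vec n l))\<^sup>2"
    using tight unit_vec_in_Hvecs[OF K l] by blast
  then show ?thesis
    using l by (simp add: ip_unit_vec_left vnorm_unit_vec)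
qed

lemma tight_frame_offdiag:
  assumes j: "j < n" and k: "k < n" and jk: "j \<noteq> k" and c: "c \<in> K"
  shows "Re (c * (\<Sum>i<N. F i $ j * cnj (F i $ k))) = 0"
proof -
  let ?f = "unit_vec n j + c \<cdot>\<^sub>v unit_vec n k"
  have "?f \<in> Hvecs K n"
    using K j k c by (intro add_in_Hvecs smult_in_Hvecs unit_vec_in_Hvecs)
  then have "A * (1 + (cmod c)\<^sup>2) = (\<Sum>i<N. (cmod (ip ?f (F i)))\<^sup>2)"
    using tight vnorm_unit_vec_add_smult[OF j k jk] by simp
  also have "\<dots> = (\<Sum>i<N. (cmod (F i $ j))\<^sup>2 + (cmod c)\<^sup>2 * (cmod (F i $ k))\<^sup>2
      + 2 * Re (c * (F i $ j * cnj (F i $ k))))"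
    using j k by (intro sum.cong refl)
      (simp add: ip_add_left ip_smult_left ip_unit_vec_left cmod_add_power2 norm_mult power_mult_distrib algebra_simps)
  also have "\<dots> = (\<Sum>i<N. (cmod (F i $ j))\<^sup>2) + (cmod c)\<^sup>2 * (\<Sum>i<N. (cmod (F i $ k))\<^sup>2)
      + 2 * Re (c * (\<Sum>i<N. F i $ j * cnj (F i $ k)))"
    by (simp add: sum.distrib sum_distrib_left Re_sum)
  also have "\<dots> = A + (cmod c)\<^sup>2 * A + 2 * Re (c * (\<Sum>i<N. F i $ j * cnj (F i $ k)))"
    unfolding tight_frame_diag[OF j] tight_frame_diag[OF k] ..
  finally show ?thesis
    by (simp add: algebra_simps)
qed

lemma tight_frame_mat_entry:
  assumes j: "j < n" and k: "k < n"
  shows "frame_mat n N F F $$ (j, k) = (if j = k then of_real A else 0)"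
proof (cases "j = k")
  case True
  have "frame_mat n N F F $$ (j, k) = (\<Sum>i<N. F i $ j * cnj (F i $ j))"
    using True j by (simp add: frame_mat_def)
  also have "\<dots> = of_real (\<Sum>i<N. (cmod (F i $ j))\<^sup>2)"
    unfolding of_real_sum by (intro sum.cong refl) (simp only: complex_norm_square)
  finally have "frame_mat n N F F $$ (j, k) = of_real (\<Sum>i<N. (cmod (F i $ j))\<^sup>2)" .
  then show ?thesis
    unfolding tight_frame_diag[OF j] using True by simp
next
  case False
  let ?T = "\<Sum>i<N. F i $ j * cnj (F i $ k)"
  have "Re ?T = 0"
    using tight_frame_offdiag[OF j k False, of 1] K by auto
  moreover have "Im ?T = 0"
  proof (cases "K = UNIV")
    case True
    then show ?thesis
      using tight_frame_offdiag[OF j k False, of \<i>] by simp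
  next
    case False
    then have "\<forall>i<N. F i $ j \<in> \<real> \<and> F i $ k \<in> \<real>"
      using K F j k unfolding Hvecs_def by auto
    then have "?T \<in> \<real>"
      by (auto intro!: sum_in_Reals Reals_mult simp: Reals_cnj_iff)
    then show ?thesis
      by (simp add: complex_is_Real_iff)
  qed
  ultimately show ?thesis
    using False j k by (simp add: frame_mat_def complex_eq_iff)
qed

lemma frame_op_tight_frame:
  assumes a: "a \<in> carrier_vec n"
  shows "frame_op n N F a = of_real A \<cdot>\<^sub>v a"
proof -
  have FC: "\<forall>i<N. F i \<in> carrier_vec n"
    using F Hvecs_carrier by blast
  show ?thesis
  proof (rule eq_vecI)
    fix j assume "j < dim_vec (of_real A \<cdot>\<^sub>v a)"
    then have j: "j < n"
      using a by simp
    have "frame_op n N F a $ j = (\<Sum>k<n. frame_mat n N F F $$ (j, k) * a $ k)"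
      using FC a j by (simp add: frame_op_eq_frame_mat scalar_prod_def lessThan_atLeast0 frame_mat_def)
    also have "\<dots> = (\<Sum>k<n. (if j = k then of_real A * a $ k else 0))"
      by (intro sum.cong refl) (simp add: tight_frame_mat_entry j)
    also have "\<dots> = (of_real A \<cdot>\<^sub>v a) $ j"
      using a j by simp
    finally show "frame_op n N F a $ j = (of_real A \<cdot>\<^sub>v a) $ j" .
  qed (use FC a in \<open>simp add: frame_op_eq_frame_mat\<close>)
qed

lemma canon_dual_tight_frame:
  assumes A: "0 < A" and i: "i < N"
  shows "canon_dual n N F i = of_real (1 / A) \<cdot>\<^sub>v F i"
proof (rule canon_dual_eqI)
  show "inj_on (frame_op n N F) (carrier_vec n)"
  proof (rule inj_onI)
    fix a b assume "a \<in> carrier_vec n" "b \<in> carrier_vec n" "frame_op n N F a = frame_op n N F b"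
    then have "of_real (1 / A) \<cdot>\<^sub>v (of_real A \<cdot>\<^sub>v a) = of_real (1 / A) \<cdot>\<^sub>v (of_real A \<cdot>\<^sub>v b)"
      by (simp add: frame_op_tight_frame)
    then show "a = b"
      using A by (simp add: smult_smult_assoc)
  qed
  have Fi: "F i \<in> carrier_vec n"
    using F i Hvecs_carrier by blast
  then have "frame_op n N F (of_real (1 / A) \<cdot>\<^sub>v F i) = of_real A \<cdot>\<^sub>v (of_real (1 / A) \<cdot>\<^sub>v F i)"
    by (intro frame_op_tight_frame) simp
  also have "\<dots> = F i"
    using A by (simp add: smult_smult_assoc)
  finally show "frame_op n N F (of_real (1 / A) \<cdot>\<^sub>v F i) = F i" .
qed (use F i Hvecs_carrier in auto)

end

section \<open>Canonical duals of frames bounded below\<close>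

(* The lower bound is asked for all complex vectors, also when K = \<real>: it is what makes the
   frame operator invertible on the whole of carrier_vec n. *)
locale lower_bounded_frame =
  fixes n N :: nat and u :: "nat \<Rightarrow> complex vec" and A :: real
  assumes carrier: "\<forall>i<N. u i \<in> carrier_vec n"
    and bound_pos: "0 < A"
    and lower_bound: "\<forall>a\<in>carrier_vec n. A * (vnorm a)\<^sup>2 \<le> (\<Sum>i<N. (cmod (ip a (u i)))\<^sup>2)"
begin

lemma bij_betw_frame_op: "bij_betw (frame_op n N u) (carrier_vec n) (carrier_vec n)"
proof -
  have "bij_betw ((*\<^sub>v) (frame_mat n N u u)) (carrier_vec n) (carrier_vec n)"
  proof (rule mult_mat_vec_bij_betw)
    fix a assume a: "a \<in> carrier_vec n" and "frame_mat n N u u *\<^sub>v a = 0\<^sub>v n"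
    then have "ip (frame_op n N u a) a = 0"
      using carrier by (simp add: frame_op_eq_frame_mat)
    then have "(\<Sum>i<N. (cmod (ip a (u i)))\<^sup>2) = 0"
      using ip_frame_op_self[OF carrier a] of_real_eq_0_iff by metis
    moreover have "A * (vnorm a)\<^sup>2 \<le> (\<Sum>i<N. (cmod (ip a (u i)))\<^sup>2)"
      using lower_bound a by blast
    ultimately have "A * (vnorm a)\<^sup>2 \<le> 0"
      by linarith
    then have "vnorm a = 0"
      using bound_pos by (simp add: mult_le_0_iff)
    then show "a = 0\<^sub>v n"
      using vnorm_eq_0_iff[OF a] by simp
  qed simp
  then show ?thesis
    using bij_betw_cong[of "carrier_vec n" "frame_op n N u" "(*\<^sub>v) (frame_mat n N u u)"] carrier
    by (simp add: frame_op_eq_frame_mat)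
qed

lemma inj_on_frame_op: "inj_on (frame_op n N u) (carrier_vec n)"
  using bij_betw_frame_op by (rule bij_betw_imp_inj_on)

lemma frame_op_surj:
  assumes "b \<in> carrier_vec n"
  obtains a where "a \<in> carrier_vec n" "frame_op n N u a = b"
  using bij_betw_frame_op assms unfolding bij_betw_def by (metis imageE)

lemma canon_dual_carrier_and_frame_op:
  assumes i: "i < N"
  shows canon_dual_carrier: "canon_dual n N u i \<in> carrier_vec n"
    and frame_op_canon_dual: "frame_op n N u (canon_dual n N u i) = u i"
proof -
  obtain g where g: "g \<in> carrier_vec n" "frame_op n N u g = u i"
    using frame_op_surj carrier i by blast
  moreover have "canon_dual n N u i = g"
    using inj_on_frame_op g by (rule canon_dual_eqI)
  ultimately show "canon_dual n N u i \<in> carrier_vec n" "frame_op n N u (canon_dual n N u i) = u i"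
    by simp_all
qed

lemma vnorm_canon_dual_le:
  assumes i: "i < N"
  shows "A * vnorm (canon_dual n N u i) \<le> vnorm (u i)"
proof -
  let ?v = "canon_dual n N u i"
  have v: "?v \<in> carrier_vec n"
    using canon_dual_carrier[OF i] .
  have "A * (vnorm ?v)\<^sup>2 \<le> (\<Sum>l<N. (cmod (ip ?v (u l)))\<^sup>2)"
    using lower_bound v by blast
  also have "\<dots> = Re (ip (frame_op n N u ?v) ?v)"
    using ip_frame_op_self[OF carrier v] by simp
  also have "\<dots> = Re (ip (u i) ?v)"
    using frame_op_canon_dual[OF i] by simp
  also have "\<dots> \<le> cmod (ip (u i) ?v)"
    by (rule complex_Re_le_cmod)
  also have "\<dots> \<le> vnorm (u i) * vnorm ?v"
    using carrier v i by (intro cmod_ip_le) auto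
  finally have "(A * vnorm ?v) * vnorm ?v \<le> vnorm (u i) * vnorm ?v"
    by (simp add: power2_eq_square mult_ac)
  then show ?thesis
    using bound_pos vnorm_nonneg[of ?v] vnorm_nonneg[of "u i"]
    by (cases "vnorm ?v = 0") (auto intro: mult_right_le_imp_le)
qed

lemma frame_mat_mult_canon_dual: "i < N \<Longrightarrow> frame_mat n N u u *\<^sub>v canon_dual n N u i = u i"
  using canon_dual_carrier[of i] frame_op_canon_dual[of i] carrier by (simp add: frame_op_eq_frame_mat)

lemma expansion_canon_dual:
  assumes a: "a \<in> carrier_vec n"
  shows "vec n (\<lambda>j. \<Sum>i<N. ip a (u i) * canon_dual n N u i $ j) = a"
proof -
  let ?h = "vec n (\<lambda>j. \<Sum>i<N. ip a (u i) * canon_dual n N u i $ j)"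
  have V: "\<forall>i<N. canon_dual n N u i \<in> carrier_vec n"
    using canon_dual_carrier by blast
  have "frame_op n N u ?h = frame_mat n N u u *\<^sub>v ?h"
    using carrier by (simp add: frame_op_eq_frame_mat)
  also have "\<dots> = vec n (\<lambda>j. \<Sum>i<N. ip a (u i) * (frame_mat n N u u *\<^sub>v canon_dual n N u i) $ j)"
    by (rule mult_mat_vec_lincomb[OF frame_mat_carrier V])
  also have "\<dots> = vec n (\<lambda>j. \<Sum>i<N. ip a (u i) * u i $ j)"
    by (intro eq_vecI) (auto intro!: sum.cong simp: frame_mat_mult_canon_dual)
  also have "\<dots> = frame_op n N u a"
    using carrier a by (simp add: frame_op_eq_frame_mat frame_mat_mult_vec)
  finally show ?thesis
    using inj_onD[OF inj_on_frame_op] a by simp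
qed

lemma expansion_canon_dual_coeffs:
  assumes a: "a \<in> carrier_vec n"
  shows "vec n (\<lambda>j. \<Sum>i<N. ip a (canon_dual n N u i) * u i $ j) = a"
proof -
  obtain h where h: "h \<in> carrier_vec n" "frame_op n N u h = a"
    using frame_op_surj[OF a] by blast
  have coeff: "ip a (canon_dual n N u i) = ip h (u i)" if i: "i < N" for i
  proof -
    have "ip a (canon_dual n N u i) = ip h (frame_op n N u (canon_dual n N u i))"
      unfolding h(2)[symmetric] ip_frame_op_left[OF carrier h(1)]
      using ip_frame_op_right[OF carrier h(1) canon_dual_carrier[OF i]] by simp
    then show ?thesis
      using frame_op_canon_dual[OF i] by simp
  qed
  have "vec n (\<lambda>j. \<Sum>i<N. ip a (canon_dual n N u i) * u i $ j) = vec n (\<lambda>j. \<Sum>i<N. ip h (u i) * u i $ j)"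
    by (intro eq_vecI) (auto intro!: sum.cong simp: coeff)
  also have "\<dots> = a"
    using carrier h by (simp add: frame_op_eq_frame_mat frame_mat_mult_vec)
  finally show ?thesis .
qed

lemma canon_dual_in_Hvecs:
  assumes K: "K = \<real> \<or> K = UNIV" and U: "\<forall>i<N. u i \<in> Hvecs K n" and i: "i < N"
  shows "canon_dual n N u i \<in> Hvecs K n"
proof (cases "K = UNIV")
  case True
  then show ?thesis
    using canon_dual_carrier[OF i] by (simp add: Hvecs_UNIV)
next
  case False
  then have KR: "K = \<real>"
    using K by auto
  let ?v = "canon_dual n N u i"
  have v: "?v \<in> carrier_vec n"
    using canon_dual_carrier[OF i] .
  have real: "u l $ j \<in> \<real>" if "l < N" "j < n" for l j
    using U that KR unfolding Hvecs_def by auto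
  have "cnj (u l $ j) \<in> \<real>" if "l < N" "j < n" for l j
    using real[OF that] by (simp add: Reals_cnj_iff)
  then have "frame_mat n N u u $$ (j, k) \<in> \<real>" if "j < n" "k < n" for j k
    using that real by (simp add: frame_mat_def) (intro sum_in_Reals Reals_mult; simp)
  then have "frame_op n N u (conjugate ?v) = conjugate (frame_op n N u ?v)"
    using mult_mat_vec_conjugate[OF frame_mat_carrier _ v] v carrier by (simp add: frame_op_eq_frame_mat)
  also have "\<dots> = u i"
    using frame_op_canon_dual[OF i] real i carrier by (intro eq_vecI) (auto simp: Reals_cnj_iff)
  finally have "conjugate ?v = ?v"
    using inj_onD[OF inj_on_frame_op] frame_op_canon_dual[OF i] v by simp
  then have "cnj (?v $ k) = ?v $ k" if "k < n" for k
    using that v by (metis carrier_vecD conjugate_complex_def vec_index_conjugate)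
  then show ?thesis
    unfolding Hvecs_def KR using v by (simp add: Reals_cnj_iff)
qed

lemma is_dual_pair_canon_dual:
  assumes K: "K = \<real> \<or> K = UNIV" and U: "\<forall>i<N. u i \<in> Hvecs K n"
  shows "is_dual_pair K n N u (canon_dual n N u)"
proof -
  let ?v = "canon_dual n N u"
  let ?D = "\<Sum>i<N. (vnorm (u i))\<^sup>2"
  have "is_frame K n N u"
    using U bound_pos lower_bound Hvecs_carrier by (intro is_frameI) auto
  moreover have "is_frame K n N ?v"
  proof (rule is_frameI)
    show "\<forall>i<N. ?v i \<in> Hvecs K n"
      using canon_dual_in_Hvecs[OF K U] by blast
    show "0 < 1 / (1 + ?D)"
      by (simp add: add_pos_nonneg sum_nonneg)
    show "\<forall>f\<in>Hvecs K n. 1 / (1 + ?D) * (vnorm f)\<^sup>2 \<le> (\<Sum>i<N. (cmod (ip f (?v i)))\<^sup>2)"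
    proof
      fix f assume "f \<in> Hvecs K n"
      then have f: "f \<in> carrier_vec n"
        by (rule Hvecs_carrier)
      have "(vnorm f)\<^sup>2 \<le> ?D * (\<Sum>i<N. (cmod (ip f (?v i)))\<^sup>2)"
        using carrier f expansion_canon_dual_coeffs[OF f, symmetric] by (rule reconstruction_lower_bound)
      also have "\<dots> \<le> (1 + ?D) * (\<Sum>i<N. (cmod (ip f (?v i)))\<^sup>2)"
        by (intro mult_right_mono) (auto simp: sum_nonneg)
      finally show "1 / (1 + ?D) * (vnorm f)\<^sup>2 \<le> (\<Sum>i<N. (cmod (ip f (?v i)))\<^sup>2)"
        by (simp add: field_simps add_pos_nonneg sum_nonneg)
    qed
  qed
  moreover have "f = finsum_vec TYPE(complex) n (\<lambda>i. ip f (u i) \<cdot>\<^sub>v ?v i) {..<N} \<and>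
      f = finsum_vec TYPE(complex) n (\<lambda>i. ip f (?v i) \<cdot>\<^sub>v u i) {..<N}" if "f \<in> Hvecs K n" for f
    using that Hvecs_carrier canon_dual_carrier carrier
    by (simp add: finsum_vec_smult expansion_canon_dual expansion_canon_dual_coeffs)
  ultimately show ?thesis
    unfolding is_dual_pair_def is_dual_def by blast
qed

end

section \<open>Balancing a dual pair\<close>

(* The coefficients give both summands of balanced_vec x y the norm sqrt (vnorm x * vnorm y) / 2. *)
definition balance_coeff :: "complex vec \<Rightarrow> complex vec \<Rightarrow> real" where
  "balance_coeff x y = sqrt (vnorm x * vnorm y) / (2 * vnorm x)"

definition balanced_vec :: "complex vec \<Rightarrow> complex vec \<Rightarrow> complex vec" where
  "balanced_vec x y = of_real (balance_coeff x y) \<cdot>\<^sub>v x + of_real (balance_coeff y x) \<cdot>\<^sub>v y"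

lemma balance_coeff_eq_0: "vnorm x * vnorm y = 0 \<Longrightarrow> balance_coeff x y = 0"
  unfolding balance_coeff_def by simp

lemma balance_coeff_identities:
  assumes "vnorm x \<noteq> 0" "vnorm y \<noteq> 0"
  shows "balance_coeff x y * balance_coeff y x = 1 / 4"
    and "(balance_coeff x y)\<^sup>2 * (vnorm x)\<^sup>2 = vnorm x * vnorm y / 4"
proof -
  have pos: "0 < vnorm x" "0 < vnorm y"
    using assms vnorm_nonneg by (auto simp: less_le)
  then have sq: "(sqrt (vnorm x * vnorm y))\<^sup>2 = vnorm x * vnorm y"
    by simp
  show "balance_coeff x y * balance_coeff y x = 1 / 4"
    using pos sq unfolding balance_coeff_def by (simp add: field_simps power2_eq_square mult.commute)
  show "(balance_coeff x y)\<^sup>2 * (vnorm x)\<^sup>2 = vnorm x * vnorm y / 4"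
    using pos sq unfolding balance_coeff_def by (simp add: field_simps power2_eq_square)
qed

lemma Re_ip_mult_cnj_le_balanced_vec:
  assumes a: "a \<in> carrier_vec n" and x: "x \<in> carrier_vec n" and y: "y \<in> carrier_vec n"
  shows "Re (ip a x * cnj (ip a y)) \<le> (cmod (ip a (balanced_vec x y)))\<^sup>2"
proof (cases "vnorm x = 0 \<or> vnorm y = 0")
  case True
  then have "x = 0\<^sub>v n \<or> y = 0\<^sub>v n"
    using vnorm_eq_0_iff x y by blast
  then show ?thesis
    using a by auto
next
  case False
  let ?p = "of_real (balance_coeff x y) * ip a x" and ?q = "of_real (balance_coeff y x) * ip a y"
  have "ip a (balanced_vec x y) = ?p + ?q"
    unfolding balanced_vec_def using a x y by (simp add: ip_add_right ip_smult_right)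
  then have "(cmod (ip a (balanced_vec x y)))\<^sup>2 = (cmod (?p - ?q))\<^sup>2 + 4 * Re (?p * cnj ?q)"
    unfolding cmod_power2 by (simp add: power2_eq_square algebra_simps)
  also have "?p * cnj ?q = of_real (balance_coeff x y * balance_coeff y x) * (ip a x * cnj (ip a y))"
    by (simp add: mult_ac)
  also have "4 * Re \<dots> = Re (ip a x * cnj (ip a y))"
    using balance_coeff_identities(1)[of x y] False by simp
  finally show ?thesis
    by simp
qed

lemma vnorm_balanced_vec_power2_le:
  assumes x: "x \<in> carrier_vec n" and y: "y \<in> carrier_vec n"
  shows "(vnorm (balanced_vec x y))\<^sup>2 \<le> (vnorm x * vnorm y + cmod (ip y x)) / 2"
proof -
  let ?a = "balance_coeff x y" and ?b = "balance_coeff y x"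
  have "of_real ((vnorm (balanced_vec x y))\<^sup>2) = ip (balanced_vec x y) (balanced_vec x y)"
    by (simp add: ip_self)
  also have "\<dots> = of_real (?a\<^sup>2 * (vnorm x)\<^sup>2 + ?b\<^sup>2 * (vnorm y)\<^sup>2) + of_real (?a * ?b) * (ip x y + ip y x)"
    unfolding balanced_vec_def using x y
    by (simp add: ip_add_left ip_add_right ip_smult_left ip_smult_right ip_self[of x] ip_self[of y]
        power2_eq_square algebra_simps)
  finally have expand: "(vnorm (balanced_vec x y))\<^sup>2 = ?a\<^sup>2 * (vnorm x)\<^sup>2 + ?b\<^sup>2 * (vnorm y)\<^sup>2 + 2 * (?a * ?b) * Re (ip y x)"
    using ip_commute[of x y] x y by (simp add: complex_eq_iff)
  show ?thesis
  proof (cases "vnorm x = 0 \<or> vnorm y = 0")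
    case True
    then show ?thesis
      unfolding expand by (auto simp: balance_coeff_eq_0 vnorm_nonneg)
  next
    case False
    have ca: "?a\<^sup>2 * (vnorm x)\<^sup>2 = vnorm x * vnorm y / 4" and cab: "?a * ?b = 1 / 4"
      using False balance_coeff_identities[of x y] by simp_all
    have cb: "?b\<^sup>2 * (vnorm y)\<^sup>2 = vnorm x * vnorm y / 4"
      using False balance_coeff_identities(2)[of y x] by (simp add: mult.commute)
    have "Re (ip y x) \<le> cmod (ip y x)"
      by (rule complex_Re_le_cmod)
    then show ?thesis
      unfolding expand ca cb cab by (simp add: field_simps)
  qed
qed

lemma balanced_family_lower_bound:
  assumes F: "\<forall>i<N. F i \<in> carrier_vec n" and G: "\<forall>i<N. G i \<in> carrier_vec n"
    and dual: "frame_mat n N G F = 1\<^sub>m n" and a: "a \<in> carrier_vec n"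
  shows "(vnorm a)\<^sup>2 \<le> (\<Sum>i<N. (cmod (ip a (balanced_vec (F i) (G i))))\<^sup>2)"
proof -
  have "of_real ((vnorm a)\<^sup>2) = ip (frame_mat n N G F *\<^sub>v a) a"
    using dual a by (simp add: ip_self)
  also have "\<dots> = (\<Sum>i<N. ip a (F i) * ip (G i) a)"
    by (simp add: frame_mat_mult_vec[OF G a] ip_lincomb_left[OF G])
  also have "\<dots> = (\<Sum>i<N. ip a (F i) * cnj (ip a (G i)))"
    using G a by (intro sum.cong refl) (simp add: ip_commute[of "G _" a])
  finally have "(vnorm a)\<^sup>2 = (\<Sum>i<N. Re (ip a (F i) * cnj (ip a (G i))))"
    by (metis Re_complex_of_real Re_sum)
  also have "\<dots> \<le> (\<Sum>i<N. (cmod (ip a (balanced_vec (F i) (G i))))\<^sup>2)"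
    using F G a by (intro sum_mono Re_ip_mult_cnj_le_balanced_vec) auto
  finally show ?thesis .
qed

lemma op_norm_error_op_balanced_le:
  assumes K: "K = \<real> \<or> K = UNIV" and n: "0 < n" and P: "is_prob_seq N p" and i: "i < N"
    and F: "F i \<in> Hvecs K n" and G: "G i \<in> carrier_vec n"
    and U: "U i = balanced_vec (F i) (G i)" "U i \<in> Hvecs K n"
    and V: "V i \<in> carrier_vec n" "vnorm (V i) \<le> vnorm (U i)"
  shows "op_norm K n (error_op N n p {i} U V)
    \<le> (op_norm K n (error_op N n p {i} F G) + spectral_radius (error_op N n p {i} F G)) / 2"
proof -
  let ?q = "weight N n p i"
  have q: "0 \<le> ?q"
    by (rule weight_nonneg[OF P i])
  have "op_norm K n (error_op N n p {i} U V) = ?q * vnorm (U i) * vnorm (V i)"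
    by (rule op_norm_error_op_singleton[where F = U and G = V, OF K P i U(2) V(1)])
  also have "\<dots> \<le> ?q * (vnorm (U i))\<^sup>2"
    using V(2) q vnorm_nonneg[of "U i"] by (simp add: power2_eq_square mult.assoc mult_left_mono)
  also have "\<dots> \<le> ?q * ((vnorm (F i) * vnorm (G i) + cmod (ip (G i) (F i))) / 2)"
    unfolding U(1) using Hvecs_carrier[OF F] G q by (intro mult_left_mono vnorm_balanced_vec_power2_le)
  also have "\<dots> = (op_norm K n (error_op N n p {i} F G) + ?q * cmod (ip (G i) (F i))) / 2"
    using op_norm_error_op_singleton[where F = F and G = G, OF K P i F G] by (simp add: algebra_simps)
  also have "\<dots> \<le> (op_norm K n (error_op N n p {i} F G) + spectral_radius (error_op N n p {i} F G)) / 2"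
    using spectral_radius_error_op_singleton_ge[where F = F and G = G, OF n P i G] by simp
  finally show ?thesis .
qed

lemma exists_dual_pair_O1_le_A1:
  assumes K: "K = \<real> \<or> K = UNIV" and n: "0 < n" and P: "is_prob_seq N p"
    and D: "is_dual_pair K n N F G"
  shows "\<exists>U V. is_dual_pair K n N U V \<and> O1 K n N p U V \<le> A1 K n N p F G"
proof -
  have FH: "\<forall>i<N. F i \<in> Hvecs K n" and GH: "\<forall>i<N. G i \<in> Hvecs K n"
    using D unfolding is_dual_pair_def is_dual_def is_frame_def by auto
  then have FC: "\<forall>i<N. F i \<in> carrier_vec n" and GC: "\<forall>i<N. G i \<in> carrier_vec n"
    using Hvecs_carrier by blast+
  have dual: "frame_mat n N G F = 1\<^sub>m n"
    using K FC D unfolding is_dual_pair_def by (intro frame_mat_dual_eq_one) auto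
  define U where "U i = balanced_vec (F i) (G i)" for i
  have UH: "\<forall>i<N. U i \<in> Hvecs K n"
    unfolding U_def balanced_vec_def using K FH GH
    by (auto intro!: add_in_Hvecs smult_in_Hvecs)
  interpret lower_bounded_frame n N U 1
    using UH Hvecs_carrier balanced_family_lower_bound[OF FC GC dual]
    by unfold_locales (auto simp: U_def)
  let ?V = "canon_dual n N U"
  have N: "0 < N"
    using is_frame_N_pos[OF K n] D unfolding is_dual_pair_def by blast
  have "op_norm K n (error_op N n p {i} U ?V)
      \<le> (op_norm K n (error_op N n p {i} F G) + spectral_radius (error_op N n p {i} F G)) / 2"
    if i: "i < N" for i
    using FH GC UH canon_dual_carrier[OF i] vnorm_canon_dual_le[OF i] i
    by (intro op_norm_error_op_balanced_le[OF K n P i]) (auto simp: U_def)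
  then have "O1 K n N p U ?V \<le> A1 K n N p F G"
    unfolding O1_eq_Max A1_eq_Max using N by (intro Max_image_mono) auto
  moreover have "is_dual_pair K n N U ?V"
    by (rule is_dual_pair_canon_dual[OF K UH])
  ultimately show ?thesis
    by blast
qed

lemma O1_opt_eq_A1_opt:
  assumes K: "K = \<real> \<or> K = UNIV" and n: "0 < n" and P: "is_prob_seq N p"
  shows "O1_opt K n N p = A1_opt K n N p"
proof -
  define SO where "SO = {O1 K n N p F G | F G. is_dual_pair K n N F G}"
  define SA where "SA = {A1 K n N p F G | F G. is_dual_pair K n N F G}"
  have bounds: "0 \<le> A1 K n N p F G \<and> A1 K n N p F G \<le> O1 K n N p F G"
    if D: "is_dual_pair K n N F G" for F G
  proof -
    have "\<forall>i<N. F i \<in> Hvecs K n" "\<forall>i<N. G i \<in> carrier_vec n"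
      using D Hvecs_carrier unfolding is_dual_pair_def is_dual_def is_frame_def by blast+
    moreover have "0 < N"
      using is_frame_N_pos[OF K n] D unfolding is_dual_pair_def by blast
    ultimately show ?thesis
      using A1_nonneg[OF K n P] A1_le_O1[OF K n P] by blast
  qed
  have "Inf SO = Inf SA"
  proof (cases "SO = {}")
    case True
    then show ?thesis
      unfolding SO_def SA_def by auto
  next
    case False
    then have ne: "SO \<noteq> {}" "SA \<noteq> {}"
      unfolding SO_def SA_def by auto
    have "0 \<le> O1 K n N p F G" if "is_dual_pair K n N F G" for F G
      using bounds[OF that] by linarith
    then have bdd: "bdd_below SO" "bdd_below SA"
      unfolding SO_def SA_def using bounds by (auto intro!: bdd_belowI[of _ 0])
    have "Inf SA \<le> Inf SO"
      using ne(1) bdd(2) bounds unfolding SO_def SA_def by (intro cInf_mono) auto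
    moreover have "Inf SO \<le> Inf SA"
      using ne(2) bdd(1) exists_dual_pair_O1_le_A1[OF K n P] unfolding SO_def SA_def
      by (intro cInf_mono) blast+
    ultimately show ?thesis
      by simp
  qed
  then show ?thesis
    unfolding O1_opt_def A1_opt_def SO_def SA_def .
qed

lemma A1_canon_dual_tight_frame:
  assumes K: "K = \<real> \<or> K = UNIV" and n: "0 < n" and T: "is_tight_frame K n N F"
    and P: "is_prob_seq N p"
  shows "A1 K n N p F (canon_dual n N F) = O1 K n N p F (canon_dual n N F)"
proof -
  obtain A where A: "0 < A" and F: "\<forall>i<N. F i \<in> Hvecs K n"
    and tight: "\<forall>f\<in>Hvecs K n. (\<Sum>i<N. (cmod (ip f (F i)))\<^sup>2) = A * (vnorm f)\<^sup>2"
    using T unfolding is_tight_frame_def by blast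
  let ?G = "canon_dual n N F"
  have "spectral_radius (error_op N n p {i} F ?G) = op_norm K n (error_op N n p {i} F ?G)"
    if i: "i < N" for i
  proof -
    let ?q = "weight N n p i"
    have G: "?G i = of_real (1 / A) \<cdot>\<^sub>v F i"
      by (rule canon_dual_tight_frame[OF K F tight A i])
    have FHi: "F i \<in> Hvecs K n"
      using F i by blast
    then have Fi: "F i \<in> carrier_vec n"
      by (rule Hvecs_carrier)
    then have Gi: "?G i \<in> carrier_vec n"
      unfolding G by simp
    have norm: "op_norm K n (error_op N n p {i} F ?G) = ?q * (vnorm (F i))\<^sup>2 / A"
      using op_norm_error_op_singleton[where F = F and G = "canon_dual n N F", OF K P i FHi Gi] A
      by (simp add: G vnorm_smult norm_divide power2_eq_square)
    have "?q * (vnorm (F i))\<^sup>2 / A \<le> spectral_radius (error_op N n p {i} F ?G)"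
      using spectral_radius_error_op_singleton_ge[where F = F and G = "canon_dual n N F", OF n P i Gi] A
      by (simp add: G ip_smult_left ip_self norm_mult norm_divide norm_power)
    moreover have "spectral_radius (error_op N n p {i} F ?G) \<le> op_norm K n (error_op N n p {i} F ?G)"
      using spectral_radius_error_op_singleton_le[where F = F and G = "canon_dual n N F", OF n P i Fi Gi]
        op_norm_error_op_singleton[where F = F and G = "canon_dual n N F", OF K P i FHi Gi]
      by simp
    ultimately show ?thesis
      unfolding norm by simp
  qed
  then show ?thesis
    unfolding A1_eq_Max O1_eq_Max by (intro arg_cong[where f = Max] image_cong) auto
qed

lemma error_op_dim0: "error_op N 0 p L F G = error_op N 0 p L F' G'"
  unfolding error_op_def by (rule eq_matI) auto

lemma O1_opt_dim0:
  assumes "is_dual_pair K 0 N F G"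
  shows "O1_opt K 0 N p = O1 K 0 N p F G"
proof -
  have "O1 K 0 N p F' G' = O1 K 0 N p F G" for F' G'
    unfolding O1_def by (simp only: error_op_dim0[of N p _ F' G' F G])
  then have "{O1 K 0 N p F' G' | F' G'. is_dual_pair K 0 N F' G'} = {O1 K 0 N p F G}"
    using assms by blast
  then show ?thesis
    unfolding O1_opt_def by simp
qed

lemma A1_opt_dim0:
  assumes "is_dual_pair K 0 N F G"
  shows "A1_opt K 0 N p = A1 K 0 N p F G"
proof -
  have "A1 K 0 N p F' G' = A1 K 0 N p F G" for F' G'
    unfolding A1_def by (simp only: error_op_dim0[of N p _ F' G' F G])
  then have "{A1 K 0 N p F' G' | F' G'. is_dual_pair K 0 N F' G'} = {A1 K 0 N p F G}"
    using assms by blast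
  then show ?thesis
    unfolding A1_opt_def by simp
qed

theorem theorem4p3:
  fixes K :: "complex set" and n N :: nat and F :: "nat \<Rightarrow> complex vec" and p :: "nat \<Rightarrow> real"
  assumes "K = \<real> \<or> K = UNIV"
    and "is_tight_frame K n N F"
    and "is_prob_seq N p"
  shows "is_POD_pair K n N p F (canon_dual n N F) \<longleftrightarrow> (F, canon_dual n N F) \<in> zeta1 K n N p"
proof (cases "n = 0")
  case True
  have "O1 K n N p F (canon_dual n N F) = O1_opt K n N p \<and> A1 K n N p F (canon_dual n N F) = A1_opt K n N p"
    if "is_dual_pair K n N F (canon_dual n N F)"
    using O1_opt_dim0[OF that[unfolded True]] A1_opt_dim0[OF that[unfolded True]] unfolding True by simp
  then show ?thesis
    unfolding is_POD_pair_def zeta1_def is_PASOD_pair_def by auto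
next
  case False
  then have n: "0 < n"
    by simp
  have "A1 K n N p F (canon_dual n N F) = O1 K n N p F (canon_dual n N F)"
    using assms(1) n assms(2,3) by (rule A1_canon_dual_tight_frame)
  moreover have "O1_opt K n N p = A1_opt K n N p"
    using assms(1) n assms(3) by (rule O1_opt_eq_A1_opt)
  ultimately show ?thesis
    unfolding is_POD_pair_def zeta1_def is_PASOD_pair_def by auto
qed

end
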